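(* Let $P,Q,R$ be unary predicate symbols and $S$ a $0$-ary predicate symbol, and let $$\Gamma = \forall x\, \exists y\, (Py \wedge (Qy \rightarrow Rx)) \wedge \neg \forall x\, Rx, \qquad \Delta = \forall x\, (Px \rightarrow (Qx \vee S)) \rightarrow S.$$ Let $\mathcal M=\langle W,\le,v_0,D,\phi\rangle$ be a G-model (interpreting $P$ and $Q$) with base point $v_0$. Then: 1. $v_0\Vdash\exists R\,\Gamma$ if and only if $\mathcal M$ satisfies $I(P,Q)$: for every $w\in W$ there is $a\in D$ with $v_0\Vdash P\mathbf a$ and $w\not\Vdash Q\mathbf a$. 2. $v_0\Vdash\forall S\,\Delta$ if and only if $\mathcal M$ satisfies $J(P,Q)$: for every $w\in W$ there is $a\in D$ with $w\Vdash P\mathbf a$ and $w\not\Vdash Q\mathbf a$.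
   Context: $\neg A$ abbreviates $A\rightarrow\perp$. A G-model is $\mathcal{M}=\langle W,\le,v_0,D,\phi\rangle$: $W$ a nonempty set of states, $\le$ a reflexive transitive relation on $W$, $v_0\in W$ with $v_0\le v$ for all $v\in W$, $D$ a nonempty domain, and for each $k$-ary predicate symbol $P$ a set $\phi(P)\subseteq W\times D^k$ that is monotone: if $v\le w$ and $\langle v,a_1,\dots,a_k\rangle\in\phi(P)$ then $\langle w,a_1,\dots,a_k\rangle\in\phi(P)$. Forcing between states and sentences with constants $\mathbf a$ for elements $a\in D$: $v\Vdash P\mathbf a_1\dots\mathbf a_k$ iff $\langle v,a_1,\dots,a_k\rangle\in\phi(P)$; $\wedge,\vee$ are evaluated pointwise; $v\Vdash A\rightarrow B$ iff for all $w\ge v$, $w\Vdash A$ implies $w\Vdash B$; $\perp$ is never forced; $v\Vdash\exists x A$ iff $v\Vdash A[\mathbf a/x]$ for some $a\in D$; $v\Vdash\forall xA$ iff $v\Vdash A[\mathbf a/x]$ for all $a\in D$. Second-order quantifiers: $v\Vdash\exists R\,A$ iff there is a monotone $R'\subseteq W\times D$ such that $v\Vdash A$ in the model obtained by interpreting $R$ as $R'$; $v\Vdash\forall S\,A$ iff for every upward-closed $S'\subseteq W$, $v\Vdash A$ in the model obtained by interpreting the propositional letter $S$ as $S'$. *)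

theory Defs
  imports Main
begin

datatype 'd trm = V nat | C 'd

datatype ('p, 'd) fm =
    Atom 'p "'d trm list"
  | Bot
  | Conj "('p, 'd) fm" "('p, 'd) fm"
  | Disj "('p, 'd) fm" "('p, 'd) fm"
  | Imp "('p, 'd) fm" "('p, 'd) fm"
  | Ex nat "('p, 'd) fm"
  | All nat "('p, 'd) fm"
  | Ex1 'p "('p, 'd) fm"    \<comment> \<open>second-order \<open>\<exists>R\<close>, \<open>R\<close> unary\<close>
  | All0 'p "('p, 'd) fm"   \<comment> \<open>second-order \<open>\<forall>S\<close>, \<open>S\<close> propositional (0-ary)\<close>

definition Neg :: "('p, 'd) fm \<Rightarrow> ('p, 'd) fm" where
  "Neg A = Imp A Bot"

fun subst_trm :: "nat \<Rightarrow> 'd \<Rightarrow> 'd trm \<Rightarrow> 'd trm" where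
  "subst_trm x a (V y) = (if y = x then C a else V y)"
| "subst_trm x a (C b) = C b"

fun subst :: "nat \<Rightarrow> 'd \<Rightarrow> ('p, 'd) fm \<Rightarrow> ('p, 'd) fm" where
  "subst x a (Atom p ts) = Atom p (map (subst_trm x a) ts)"
| "subst x a Bot = Bot"
| "subst x a (Conj A B) = Conj (subst x a A) (subst x a B)"
| "subst x a (Disj A B) = Disj (subst x a A) (subst x a B)"
| "subst x a (Imp A B) = Imp (subst x a A) (subst x a B)"
| "subst x a (Ex y A) = (if y = x then Ex y A else Ex y (subst x a A))"
| "subst x a (All y A) = (if y = x then All y A else All y (subst x a A))"
| "subst x a (Ex1 p A) = Ex1 p (subst x a A)"
| "subst x a (All0 p A) = All0 p (subst x a A)"

lemma size_subst_trm[simp]: "size (subst_trm x a t) = size t"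
  by (cases t) auto

lemma size_subst[simp]: "size (subst x a A) = size A"
  by (induction A) (auto simp: size_list_conv_sum_list comp_def)

text \<open>A G-model \<open>\<langle>W,\<le>,v\<^sub>0,D,\<phi>\<rangle>\<close>; \<open>\<phi> P \<subseteq> W \<times> D\<^sup>k\<close> with tuples as lists.\<close>
definition gmodel ::
  "'w set \<Rightarrow> ('w \<Rightarrow> 'w \<Rightarrow> bool) \<Rightarrow> 'w \<Rightarrow> 'd set \<Rightarrow> ('p \<Rightarrow> ('w \<times> 'd list) set) \<Rightarrow> bool" where
  "gmodel W le v0 D phi \<longleftrightarrow>
     W \<noteq> {} \<and>
     (\<forall>v\<in>W. le v v) \<and>
     (\<forall>u\<in>W. \<forall>v\<in>W. \<forall>w\<in>W. le u v \<longrightarrow> le v w \<longrightarrow> le u w) \<and>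
     v0 \<in> W \<and> (\<forall>v\<in>W. le v0 v) \<and>
     D \<noteq> {} \<and>
     (\<forall>P. phi P \<subseteq> W \<times> lists D) \<and>
     (\<forall>P v w as. v \<in> W \<longrightarrow> w \<in> W \<longrightarrow> le v w \<longrightarrow> (v, as) \<in> phi P \<longrightarrow> (w, as) \<in> phi P)"

definition mono_rel :: "'w set \<Rightarrow> ('w \<Rightarrow> 'w \<Rightarrow> bool) \<Rightarrow> 'd set \<Rightarrow> ('w \<times> 'd) set \<Rightarrow> bool" where
  "mono_rel W le D R' \<longleftrightarrow> R' \<subseteq> W \<times> D \<and>
     (\<forall>v w a. v \<in> W \<longrightarrow> w \<in> W \<longrightarrow> le v w \<longrightarrow> (v, a) \<in> R' \<longrightarrow> (w, a) \<in> R')"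

definition up_closed :: "'w set \<Rightarrow> ('w \<Rightarrow> 'w \<Rightarrow> bool) \<Rightarrow> 'w set \<Rightarrow> bool" where
  "up_closed W le S' \<longleftrightarrow> S' \<subseteq> W \<and>
     (\<forall>v w. v \<in> W \<longrightarrow> w \<in> W \<longrightarrow> le v w \<longrightarrow> v \<in> S' \<longrightarrow> w \<in> S')"

function forces ::
  "'w set \<Rightarrow> ('w \<Rightarrow> 'w \<Rightarrow> bool) \<Rightarrow> 'd set \<Rightarrow> ('p \<Rightarrow> ('w \<times> 'd list) set)
     \<Rightarrow> 'w \<Rightarrow> ('p, 'd) fm \<Rightarrow> bool" where
  "forces W le D phi v (Atom p ts) = (\<exists>as. ts = map C as \<and> (v, as) \<in> phi p)"
| "forces W le D phi v Bot = False"
| "forces W le D phi v (Conj A B) = (forces W le D phi v A \<and> forces W le D phi v B)"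
| "forces W le D phi v (Disj A B) = (forces W le D phi v A \<or> forces W le D phi v B)"
| "forces W le D phi v (Imp A B) =
     (\<forall>w\<in>W. le v w \<longrightarrow> forces W le D phi w A \<longrightarrow> forces W le D phi w B)"
| "forces W le D phi v (Ex x A) = (\<exists>a\<in>D. forces W le D phi v (subst x a A))"
| "forces W le D phi v (All x A) = (\<forall>a\<in>D. forces W le D phi v (subst x a A))"
| "forces W le D phi v (Ex1 p A) =
     (\<exists>R'. mono_rel W le D R' \<and>
        forces W le D (phi(p := {(w, [a]) | w a. (w, a) \<in> R'})) v A)"
| "forces W le D phi v (All0 p A) =
     (\<forall>S'. up_closed W le S' \<longrightarrow>
        forces W le D (phi(p := {(w, []) | w. w \<in> S'})) v A)"
  by pat_completeness auto
termination by (relation "measure (\<lambda>(_, _, _, _, _, A). size A)") auto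

definition Gamma :: "'p \<Rightarrow> 'p \<Rightarrow> 'p \<Rightarrow> ('p, 'd) fm" where
  "Gamma P Q R =
     Conj (All 0 (Ex 1 (Conj (Atom P [V 1]) (Imp (Atom Q [V 1]) (Atom R [V 0])))))
          (Neg (All 0 (Atom R [V 0])))"

definition Delta :: "'p \<Rightarrow> 'p \<Rightarrow> 'p \<Rightarrow> ('p, 'd) fm" where
  "Delta P Q S =
     Imp (All 0 (Imp (Atom P [V 0]) (Disj (Atom Q [V 0]) (Atom S []))))
         (Atom S [])"

end

theory Submission
  imports Defs
begin

text \<open>For \<open>\<exists>R \<Gamma>\<close>: given \<open>I(P,Q)\<close>, let \<open>R\<^bold>a\<close> hold at \<open>w\<close> iff \<open>v\<^sub>0 \<Vdash> P\<^bold>a\<close> implies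
  \<open>w \<Vdash> Q\<^bold>a\<close>; conversely, any \<open>a\<close> with \<open>w \<nVdash> R\<^bold>a\<close> has, by the first conjunct of \<open>\<Gamma>\<close>,
  a \<open>b\<close> with \<open>v\<^sub>0 \<Vdash> P\<^bold>b\<close> and \<open>w \<nVdash> Q\<^bold>b\<close>. For \<open>\<forall>S \<Delta>\<close>: \<open>J(P,Q)\<close> refutes the antecedent of
  \<open>\<Delta>\<close> at every state; conversely, interpreting \<open>S\<close> as the set of states not below \<open>w\<close>
  makes \<open>S\<close> fail at \<open>w\<close>, so the antecedent fails at some \<open>u \<ge> w\<close> with \<open>u \<le> w\<close>;
  monotonicity moves \<open>P\<^bold>a\<close> down from \<open>u\<close> to \<open>w\<close> and \<open>Q\<^bold>a\<close> up from \<open>w\<close> to \<open>u\<close>.\<close>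

lemma singleton_eq_map_C_iff [simp]: "[C a] = map C as \<longleftrightarrow> as = [a]"
  by (cases as) auto

lemma forces_Atom_unary: "forces W le D phi v (Atom p [C a]) \<longleftrightarrow> (v, [a]) \<in> phi p"
  by simp

lemma gmodel_root_in: "gmodel W le v0 D phi \<Longrightarrow> v0 \<in> W"
  unfolding gmodel_def by blast

lemma gmodel_root_le: "gmodel W le v0 D phi \<Longrightarrow> w \<in> W \<Longrightarrow> le v0 w"
  unfolding gmodel_def by blast

lemma gmodel_refl: "gmodel W le v0 D phi \<Longrightarrow> w \<in> W \<Longrightarrow> le w w"
  unfolding gmodel_def by blast

lemma gmodel_trans:
  "gmodel W le v0 D phi \<Longrightarrow> u \<in> W \<Longrightarrow> v \<in> W \<Longrightarrow> w \<in> W \<Longrightarrow> le u v \<Longrightarrow> le v w \<Longrightarrow> le u w"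
  unfolding gmodel_def by blast

lemma gmodel_mono:
  "gmodel W le v0 D phi \<Longrightarrow> v \<in> W \<Longrightarrow> w \<in> W \<Longrightarrow> le v w \<Longrightarrow> (v, as) \<in> phi p \<Longrightarrow> (w, as) \<in> phi p"
  unfolding gmodel_def by blast

lemma forces_Ex1_Gamma:
  assumes "P \<noteq> R" and "Q \<noteq> R"
  shows "forces W le D phi v (Ex1 R (Gamma P Q R)) \<longleftrightarrow>
    (\<exists>R'. mono_rel W le D R' \<and>
       (\<forall>a\<in>D. \<exists>b\<in>D. (v, [b]) \<in> phi P \<and>
          (\<forall>w\<in>W. le v w \<longrightarrow> (w, [b]) \<in> phi Q \<longrightarrow> (w, a) \<in> R')) \<and>
       (\<forall>w\<in>W. le v w \<longrightarrow> (\<exists>a\<in>D. (w, a) \<notin> R')))"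
  using assms by (simp add: Gamma_def Neg_def)

lemma forces_All0_Delta:
  assumes "P \<noteq> S" and "Q \<noteq> S"
  shows "forces W le D phi v (All0 S (Delta P Q S)) \<longleftrightarrow>
    (\<forall>S'. up_closed W le S' \<longrightarrow> (\<forall>w\<in>W. le v w \<longrightarrow>
       (\<forall>a\<in>D. \<forall>u\<in>W. le w u \<longrightarrow> (u, [a]) \<in> phi P \<longrightarrow> (u, [a]) \<in> phi Q \<or> u \<in> S') \<longrightarrow>
       w \<in> S'))"
  using assms by (simp add: Delta_def)

lemma mono_rel_P_imp_Q:
  assumes "gmodel W le v0 D phi"
  shows "mono_rel W le D {(w, a). w \<in> W \<and> a \<in> D \<and> ((v0, [a]) \<in> phi P \<longrightarrow> (w, [a]) \<in> phi Q)}"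
  using gmodel_mono[OF assms] unfolding mono_rel_def by blast

lemma up_closed_not_below:
  assumes "gmodel W le v0 D phi" and "w \<in> W"
  shows "up_closed W le {u \<in> W. \<not> le u w}"
  using gmodel_trans[OF assms(1) _ _ assms(2)] unfolding up_closed_def by blast

lemma Gamma_witness_imp_I:
  assumes "gmodel W le v0 D phi"
    and R': "\<forall>a\<in>D. \<exists>b\<in>D. (v0, [b]) \<in> phi P \<and>
               (\<forall>w\<in>W. le v0 w \<longrightarrow> (w, [b]) \<in> phi Q \<longrightarrow> (w, a) \<in> R')"
    and not_all: "\<forall>w\<in>W. le v0 w \<longrightarrow> (\<exists>a\<in>D. (w, a) \<notin> R')"
    and "w \<in> W"
  shows "\<exists>b\<in>D. (v0, [b]) \<in> phi P \<and> (w, [b]) \<notin> phi Q"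
proof -
  have "le v0 w" using gmodel_root_le assms(1,4) .
  with not_all \<open>w \<in> W\<close> obtain a where "a \<in> D" "(w, a) \<notin> R'" by blast
  with R' \<open>w \<in> W\<close> \<open>le v0 w\<close> show ?thesis by blast
qed

lemma I_imp_Gamma_witness:
  assumes g: "gmodel W le v0 D phi"
    and I: "\<forall>w\<in>W. \<exists>a\<in>D. (v0, [a]) \<in> phi P \<and> (w, [a]) \<notin> phi Q"
  defines "R' \<equiv> {(w, a). w \<in> W \<and> a \<in> D \<and> ((v0, [a]) \<in> phi P \<longrightarrow> (w, [a]) \<in> phi Q)}"
  shows "mono_rel W le D R' \<and>
    (\<forall>a\<in>D. \<exists>b\<in>D. (v0, [b]) \<in> phi P \<and>
       (\<forall>w\<in>W. le v0 w \<longrightarrow> (w, [b]) \<in> phi Q \<longrightarrow> (w, a) \<in> R')) \<and>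
    (\<forall>w\<in>W. le v0 w \<longrightarrow> (\<exists>a\<in>D. (w, a) \<notin> R'))"
proof (intro conjI)
  show "mono_rel W le D R'"
    unfolding R'_def using mono_rel_P_imp_Q[OF g] .
  obtain b0 where b0: "b0 \<in> D" "(v0, [b0]) \<in> phi P"
    using I gmodel_root_in[OF g] by blast
  show "\<forall>a\<in>D. \<exists>b\<in>D. (v0, [b]) \<in> phi P \<and>
          (\<forall>w\<in>W. le v0 w \<longrightarrow> (w, [b]) \<in> phi Q \<longrightarrow> (w, a) \<in> R')"
  proof
    fix a assume "a \<in> D"
    show "\<exists>b\<in>D. (v0, [b]) \<in> phi P \<and>
            (\<forall>w\<in>W. le v0 w \<longrightarrow> (w, [b]) \<in> phi Q \<longrightarrow> (w, a) \<in> R')"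
    proof (cases "(v0, [a]) \<in> phi P")
      case True
      with \<open>a \<in> D\<close> show ?thesis by (auto simp: R'_def)
    next
      case False
      with \<open>a \<in> D\<close> b0 show ?thesis by (auto simp: R'_def)
    qed
  qed
  show "\<forall>w\<in>W. le v0 w \<longrightarrow> (\<exists>a\<in>D. (w, a) \<notin> R')"
    using I by (auto simp: R'_def)
qed

lemma Delta_imp_J:
  assumes g: "gmodel W le v0 D phi" and "w \<in> W"
    and Delta: "\<forall>S'. up_closed W le S' \<longrightarrow> (\<forall>w\<in>W. le v0 w \<longrightarrow>
       (\<forall>a\<in>D. \<forall>u\<in>W. le w u \<longrightarrow> (u, [a]) \<in> phi P \<longrightarrow> (u, [a]) \<in> phi Q \<or> u \<in> S') \<longrightarrow>
       w \<in> S')"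
  shows "\<exists>a\<in>D. (w, [a]) \<in> phi P \<and> (w, [a]) \<notin> phi Q"
proof -
  let ?S' = "{u \<in> W. \<not> le u w}"
  have "w \<notin> ?S'" using gmodel_refl[OF g \<open>w \<in> W\<close>] by simp
  moreover have "w \<in> ?S'" if "\<forall>a\<in>D. \<forall>u\<in>W. le w u \<longrightarrow> (u, [a]) \<in> phi P \<longrightarrow> (u, [a]) \<in> phi Q \<or> u \<in> ?S'"
    using Delta up_closed_not_below[OF g \<open>w \<in> W\<close>] \<open>w \<in> W\<close> gmodel_root_le[OF g \<open>w \<in> W\<close>] that
    by blast
  ultimately obtain a u where a: "a \<in> D" and u: "u \<in> W" "le w u" "le u w"
    and "(u, [a]) \<in> phi P" "(u, [a]) \<notin> phi Q"
    by blast
  then have "(w, [a]) \<in> phi P" "(w, [a]) \<notin> phi Q"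
    using gmodel_mono[OF g u(1) \<open>w \<in> W\<close> u(3)] gmodel_mono[OF g \<open>w \<in> W\<close> u(1,2)] by auto
  with a show ?thesis by blast
qed

lemma J_imp_Delta:
  assumes g: "gmodel W le v0 D phi"
    and J: "\<forall>w\<in>W. \<exists>a\<in>D. (w, [a]) \<in> phi P \<and> (w, [a]) \<notin> phi Q"
  shows "\<forall>S'. up_closed W le S' \<longrightarrow> (\<forall>w\<in>W. le v0 w \<longrightarrow>
    (\<forall>a\<in>D. \<forall>u\<in>W. le w u \<longrightarrow> (u, [a]) \<in> phi P \<longrightarrow> (u, [a]) \<in> phi Q \<or> u \<in> S') \<longrightarrow>
    w \<in> S')"
proof (intro allI impI ballI)
  fix S' w
  assume "w \<in> W"
    and antecedent: "\<forall>a\<in>D. \<forall>u\<in>W. le w u \<longrightarrow> (u, [a]) \<in> phi P \<longrightarrow> (u, [a]) \<in> phi Q \<or> u \<in> S'"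
  obtain a where "a \<in> D" "(w, [a]) \<in> phi P" "(w, [a]) \<notin> phi Q"
    using J \<open>w \<in> W\<close> by blast
  with antecedent \<open>w \<in> W\<close> gmodel_refl[OF g \<open>w \<in> W\<close>] show "w \<in> S'" by blast
qed

lemma Gamma_witness_iff_I:
  assumes "gmodel W le v0 D phi"
  shows "(\<exists>R'. mono_rel W le D R' \<and>
       (\<forall>a\<in>D. \<exists>b\<in>D. (v0, [b]) \<in> phi P \<and>
          (\<forall>w\<in>W. le v0 w \<longrightarrow> (w, [b]) \<in> phi Q \<longrightarrow> (w, a) \<in> R')) \<and>
       (\<forall>w\<in>W. le v0 w \<longrightarrow> (\<exists>a\<in>D. (w, a) \<notin> R')))
    \<longleftrightarrow> (\<forall>w\<in>W. \<exists>a\<in>D. (v0, [a]) \<in> phi P \<and> (w, [a]) \<notin> phi Q)"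
proof
  assume "\<exists>R'. mono_rel W le D R' \<and>
       (\<forall>a\<in>D. \<exists>b\<in>D. (v0, [b]) \<in> phi P \<and>
          (\<forall>w\<in>W. le v0 w \<longrightarrow> (w, [b]) \<in> phi Q \<longrightarrow> (w, a) \<in> R')) \<and>
       (\<forall>w\<in>W. le v0 w \<longrightarrow> (\<exists>a\<in>D. (w, a) \<notin> R'))"
  then obtain R' where
    "\<forall>a\<in>D. \<exists>b\<in>D. (v0, [b]) \<in> phi P \<and>
       (\<forall>w\<in>W. le v0 w \<longrightarrow> (w, [b]) \<in> phi Q \<longrightarrow> (w, a) \<in> R')"
    "\<forall>w\<in>W. le v0 w \<longrightarrow> (\<exists>a\<in>D. (w, a) \<notin> R')"
    by blast
  with Gamma_witness_imp_I[OF assms] show "\<forall>w\<in>W. \<exists>a\<in>D. (v0, [a]) \<in> phi P \<and> (w, [a]) \<notin> phi Q"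
    by blast
next
  assume "\<forall>w\<in>W. \<exists>a\<in>D. (v0, [a]) \<in> phi P \<and> (w, [a]) \<notin> phi Q"
  from I_imp_Gamma_witness[OF assms this] show "\<exists>R'. mono_rel W le D R' \<and>
       (\<forall>a\<in>D. \<exists>b\<in>D. (v0, [b]) \<in> phi P \<and>
          (\<forall>w\<in>W. le v0 w \<longrightarrow> (w, [b]) \<in> phi Q \<longrightarrow> (w, a) \<in> R')) \<and>
       (\<forall>w\<in>W. le v0 w \<longrightarrow> (\<exists>a\<in>D. (w, a) \<notin> R'))"
    by (rule exI)
qed

lemma Delta_iff_J:
  assumes "gmodel W le v0 D phi"
  shows "(\<forall>S'. up_closed W le S' \<longrightarrow> (\<forall>w\<in>W. le v0 w \<longrightarrow>
       (\<forall>a\<in>D. \<forall>u\<in>W. le w u \<longrightarrow> (u, [a]) \<in> phi P \<longrightarrow> (u, [a]) \<in> phi Q \<or> u \<in> S') \<longrightarrow>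
       w \<in> S'))
    \<longleftrightarrow> (\<forall>w\<in>W. \<exists>a\<in>D. (w, [a]) \<in> phi P \<and> (w, [a]) \<notin> phi Q)"
  using Delta_imp_J[OF assms] J_imp_Delta[OF assms] by (intro iffI ballI)

theorem lemma3p2:
  fixes W :: "'w set" and le :: "'w \<Rightarrow> 'w \<Rightarrow> bool" and v0 :: 'w
    and D :: "'d set" and phi :: "'p \<Rightarrow> ('w \<times> 'd list) set"
    and P Q R S :: 'p
  assumes "gmodel W le v0 D phi"
    and "distinct [P, Q, R, S]"
  shows "(forces W le D phi v0 (Ex1 R (Gamma P Q R)) \<longleftrightarrow>
            (\<forall>w\<in>W. \<exists>a\<in>D. forces W le D phi v0 (Atom P [C a]) \<and>
                            \<not> forces W le D phi w (Atom Q [C a])))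
       \<and> (forces W le D phi v0 (All0 S (Delta P Q S)) \<longleftrightarrow>
            (\<forall>w\<in>W. \<exists>a\<in>D. forces W le D phi w (Atom P [C a]) \<and>
                            \<not> forces W le D phi w (Atom Q [C a])))"
proof -
  have "P \<noteq> R" "Q \<noteq> R" "P \<noteq> S" "Q \<noteq> S" using assms(2) by auto
  show ?thesis
    unfolding forces_Ex1_Gamma[OF \<open>P \<noteq> R\<close> \<open>Q \<noteq> R\<close>]
      forces_All0_Delta[OF \<open>P \<noteq> S\<close> \<open>Q \<noteq> S\<close>] forces_Atom_unary
      Gamma_witness_iff_I[OF assms(1)] Delta_iff_J[OF assms(1)]
    by simp
qed

end
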